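(* Suppose Assumption A (constant $d$) and Assumption E (constants $C_\lambda,L_\lambda$) hold, let $r>0$, and let $\epsilon_\star\in(0,1)$ be such that $m^*_\epsilon\le G_\epsilon$ for all $\epsilon\in(0,\epsilon_\star)$. Then for all $\theta^\circ\in\Theta^r_{\mathfrak a}$ and all $\epsilon\in(0,\epsilon_\star)$: (i) $\mathbb E_{\theta^\circ}P_{M|Y}(1\le M<m^-_{*,\epsilon})\le2\exp\big(-\tfrac{C_\lambda(1\vee r)}{5}m^*_\epsilon+\log G_\epsilon\big)$; (ii) $\mathbb E_{\theta^\circ}P_{M|Y}(m^+_{*,\epsilon}<M\le G_\epsilon)\le2\exp\big(-\tfrac{C_\lambda(1\vee r)}{5}m^*_\epsilon+\log G_\epsilon\big)$.
   Context: Let $\ell^2$ be the space of square-summable real sequences with norm $\|\cdot\|$. Fix a bounded real sequence $\lambda=(\lambda_j)_{j\ge1}$ with $\lambda_j\ne0$ for all $j$ and a noise level $\epsilon\in(0,1)$. For a parameter $\theta^\circ$ the data $Y=(Y_j)_{j\ge1}$ satisfy $Y_j=\lambda_j\theta^\circ_j+\sqrt\epsilon\,\xi_j$ with $\xi_j$ i.i.d. $N(0,1)$; $\mathbb E_{\theta^\circ}$ denotes expectation under this law. Fix prior means $\eta=(\eta_j)_{j\ge1}$ and prior variances $\tau_j\in(0,\infty)$ (possibly depending on $\epsilon$). Put $\sigma_j:=(\lambda_j^2\epsilon^{-1}+\tau_j^{-1})^{-1}$, $\theta^Y_j:=\sigma_j(\tau_j^{-1}\eta_j+\lambda_j\epsilon^{-1}Y_j)$,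 $\hat\theta^m_j:=\theta^Y_j$ for $j\le m$, $\hat\theta^m_j:=\eta_j$ for $j>m$. Define $b_m:=\sum_{j>m}(\theta^\circ_j-\eta_j)^2$, $\Lambda_j:=\lambda_j^{-2}$, $\Lambda_{(m)}:=\max_{1\le j\le m}\Lambda_j$, $\bar\Lambda_m:=m^{-1}\sum_{j=1}^m\Lambda_j$. Let $G_\epsilon:=\max\{1\le m\le\lfloor\epsilon^{-1}\rfloor:\epsilon\Lambda_{(m)}\le\Lambda_1\}$. Assumption A: there is $d>0$ with $\tau_j\ge d\,(\epsilon^{1/2}\Lambda_j^{1/2}\vee\epsilon\Lambda_j)$ for all $1\le j\le G_\epsilon$, $\epsilon\in(0,1)$. Assumption E: there are constants $C_\lambda\ge1$, $L_\lambda\ge1$ such that for all $k,l\in\mathbb N$: (i) $\sup_{j>k}\lambda_j^2\le C_\lambda\min_{1\le j\le k}\lambda_j^2=C_\lambda\Lambda_{(k)}^{-1}$; (ii) $\Lambda_{(kl)}\le\Lambda_{(k)}\Lambda_{(l)}$; (iii) $\Lambda_{(k)}/\bar\Lambda_k\le L_\lambda$. Let $\mathfrak a=(\mathfrak a_j)_{j\ge1}$ be strictly positive, non-increasing, with $\mathfrak a_1=1$ and $\mathfrak a_j\to0$; for $r>0$, $\Theta^r_{\mathfrak a}:=\{\theta:\sum_{j\ge1}(\theta_j-\eta_j)^2/\mathfrak a_j\le r\}$. Let $m^*_\epsilon:=\min\{m\ge1:\mathfrak a_m\vee\epsilon m\bar\Lambda_m\le\mathfrak a_k\vee\epsilon k\bar\Lambda_k\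 \forall k\ge1\}$ and $\Phi^*_\epsilon:=\mathfrak a_{m^*_\epsilon}\vee\epsilon m^*_\epsilon\bar\Lambda_{m^*_\epsilon}$. Hierarchical prior: a random dimension $M$ with values in $\{1,\dots,G_\epsilon\}$ and $P(M=m)\propto\exp(-3C_\lambda m/2)\prod_{j=1}^m(\tau_j/\sigma_j)^{1/2}$; conditionally on $M=m$ the parameter $\vartheta^M$ has independent coordinates $N(\eta_j,\tau_j)$ for $j\le m$ and equal to $\eta_j$ for $j>m$, and $Y_j=\lambda_j\vartheta^M_j+\sqrt\epsilon\xi_j$. The posterior of $M$ is $P_{M|Y}(M=m)=\exp(\frac12\{\|\hat\theta^m-\eta\|_\sigma^2-3C_\lambda m\})/\sum_{k=1}^{G_\epsilon}\exp(\frac12\{\|\hat\theta^k-\eta\|_\sigma^2-3C_\lambda k\})$ with $\|x\|_\sigma^2:=\sum_j x_j^2/\sigma_j$. Finally $m^-_{*,\epsilon}:=\min\{m\in\{1,\dots,m^*_\epsilon\}:b_m\le8L_\lambda C_\lambda(1+1/d)(1\vee r)\Phi^*_\epsilon\}$ and $m^+_{*,\epsilon}:=\max\{m\in\{m^*_\epsilon,\dots,G_\epsilon\}:m\le5L_\lambda(\epsilon\Lambda_{(m^*_\epsilon)})^{-1}(1\vee r)\Phi^*_\epsilon\}$. *)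

theory Defs
  imports "HOL-Probability.Probability"
begin

text \<open>Sequences are functions nat \<Rightarrow> real, indexed from 1 (index 0 is unused).\<close>

definition Lam :: "(nat \<Rightarrow> real) \<Rightarrow> nat \<Rightarrow> real" where
  "Lam lam j = 1 / (lam j)^2"

definition Lam_max :: "(nat \<Rightarrow> real) \<Rightarrow> nat \<Rightarrow> real" where
  "Lam_max lam m = Max (Lam lam ` {1..m})"

definition Lam_bar :: "(nat \<Rightarrow> real) \<Rightarrow> nat \<Rightarrow> real" where
  "Lam_bar lam m = (\<Sum>j=1..m. Lam lam j) / real m"

definition G_eps :: "(nat \<Rightarrow> real) \<Rightarrow> real \<Rightarrow> nat" where
  "G_eps lam eps = Max {m. 1 \<le> m \<and> m \<le> nat \<lfloor>1 / eps\<rfloor> \<and> eps * Lam_max lam m \<le> Lam lam 1}"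

definition sig :: "(nat \<Rightarrow> real) \<Rightarrow> real \<Rightarrow> (nat \<Rightarrow> real) \<Rightarrow> nat \<Rightarrow> real" where
  "sig lam eps tau j = 1 / ((lam j)^2 / eps + 1 / tau j)"

definition thetaY :: "(nat \<Rightarrow> real) \<Rightarrow> real \<Rightarrow> (nat \<Rightarrow> real) \<Rightarrow> (nat \<Rightarrow> real)
    \<Rightarrow> (nat \<Rightarrow> real) \<Rightarrow> nat \<Rightarrow> real" where
  "thetaY lam eps eta tau Y j = sig lam eps tau j * (eta j / tau j + lam j * Y j / eps)"

definition theta_hat :: "(nat \<Rightarrow> real) \<Rightarrow> real \<Rightarrow> (nat \<Rightarrow> real) \<Rightarrow> (nat \<Rightarrow> real)
    \<Rightarrow> (nat \<Rightarrow> real) \<Rightarrow> nat \<Rightarrow> nat \<Rightarrow> real" where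
  "theta_hat lam eps eta tau Y m j = (if j \<le> m then thetaY lam eps eta tau Y j else eta j)"

text \<open>\<open>\<parallel>\<theta>^m - \<eta>\<parallel>_\<sigma>^2\<close>; only the coordinates \<open>1..m\<close> are nonzero.\<close>
definition sig_norm_sq :: "(nat \<Rightarrow> real) \<Rightarrow> real \<Rightarrow> (nat \<Rightarrow> real) \<Rightarrow> (nat \<Rightarrow> real)
    \<Rightarrow> (nat \<Rightarrow> real) \<Rightarrow> nat \<Rightarrow> real" where
  "sig_norm_sq lam eps eta tau Y m =
     (\<Sum>j=1..m. (theta_hat lam eps eta tau Y m j - eta j)^2 / sig lam eps tau j)"

definition post :: "(nat \<Rightarrow> real) \<Rightarrow> real \<Rightarrow> (nat \<Rightarrow> real) \<Rightarrow> (nat \<Rightarrow> real) \<Rightarrow> real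
    \<Rightarrow> (nat \<Rightarrow> real) \<Rightarrow> nat \<Rightarrow> real" where
  "post lam eps eta tau C Y m =
     exp ((sig_norm_sq lam eps eta tau Y m - 3 * C * real m) / 2) /
     (\<Sum>k=1..G_eps lam eps. exp ((sig_norm_sq lam eps eta tau Y k - 3 * C * real k) / 2))"

text \<open>Law of the data \<open>Y_j = \<lambda>_j \<theta>_j + \<surd>\<epsilon> \<xi>_j\<close>, \<open>\<xi>_j\<close> iid N(0,1) (normal_density takes the std. deviation).\<close>
definition data_law :: "(nat \<Rightarrow> real) \<Rightarrow> real \<Rightarrow> (nat \<Rightarrow> real) \<Rightarrow> (nat \<Rightarrow> real) measure" where
  "data_law lam eps theta =
     PiM UNIV (\<lambda>j. density lborel (normal_density (lam j * theta j) (sqrt eps)))"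

definition b_bias :: "(nat \<Rightarrow> real) \<Rightarrow> (nat \<Rightarrow> real) \<Rightarrow> nat \<Rightarrow> real" where
  "b_bias theta eta m = (\<Sum>j. (theta (j + m + 1) - eta (j + m + 1))^2)"

definition Theta_a :: "(nat \<Rightarrow> real) \<Rightarrow> (nat \<Rightarrow> real) \<Rightarrow> real \<Rightarrow> (nat \<Rightarrow> real) set" where
  "Theta_a a eta r = {theta. summable (\<lambda>j. (theta (j+1) - eta (j+1))^2 / a (j+1)) \<and>
                            (\<Sum>j. (theta (j+1) - eta (j+1))^2 / a (j+1)) \<le> r}"

definition Phi :: "(nat \<Rightarrow> real) \<Rightarrow> (nat \<Rightarrow> real) \<Rightarrow> real \<Rightarrow> nat \<Rightarrow> real" where
  "Phi a lam eps m = max (a m) (eps * real m * Lam_bar lam m)"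

definition m_star :: "(nat \<Rightarrow> real) \<Rightarrow> (nat \<Rightarrow> real) \<Rightarrow> real \<Rightarrow> nat" where
  "m_star a lam eps = (LEAST m. 1 \<le> m \<and> (\<forall>k\<ge>1. Phi a lam eps m \<le> Phi a lam eps k))"

definition Phi_star :: "(nat \<Rightarrow> real) \<Rightarrow> (nat \<Rightarrow> real) \<Rightarrow> real \<Rightarrow> real" where
  "Phi_star a lam eps = Phi a lam eps (m_star a lam eps)"

definition m_minus :: "(nat \<Rightarrow> real) \<Rightarrow> (nat \<Rightarrow> real) \<Rightarrow> real \<Rightarrow> (nat \<Rightarrow> real) \<Rightarrow> (nat \<Rightarrow> real)
    \<Rightarrow> real \<Rightarrow> real \<Rightarrow> real \<Rightarrow> real \<Rightarrow> nat" where
  "m_minus a lam eps theta eta C L d r =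
     (LEAST m. m \<in> {1..m_star a lam eps} \<and>
        b_bias theta eta m \<le> 8 * L * C * (1 + 1/d) * max 1 r * Phi_star a lam eps)"

definition m_plus :: "(nat \<Rightarrow> real) \<Rightarrow> (nat \<Rightarrow> real) \<Rightarrow> real \<Rightarrow> real \<Rightarrow> real \<Rightarrow> nat" where
  "m_plus a lam eps L r =
     Max {m \<in> {m_star a lam eps..G_eps lam eps}.
        real m \<le> 5 * L * (1 / (eps * Lam_max lam (m_star a lam eps))) * max 1 r * Phi_star a lam eps}"

end

theory Submission
  imports Defs
begin

text \<open>
  For fixed data, the posterior weight of \<open>M = m\<close> is at most its ratio to the weight of \<open>m^*_\<epsilon>\<close>,
  which is \<open>exp ((N_m - N_{m^*} - 3 C (m - m^*)) / 2)\<close> with the statistic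
  \<open>N_k = \<Sum>_{j\<le>k} w_j (Y_j - \<lambda>_j \<eta>_j)^2 / \<epsilon>\<close>, \<open>w_j = \<sigma>_j \<lambda>_j^2 / \<epsilon> \<in> (0, 1]\<close>.
  Its expectation factorises into one-dimensional Gaussian moments
  \<open>E exp (c (Y - b)^2) = exp (c (\<mu> - b)^2 / (1 - 2 c \<epsilon>)) / \<surd>(1 - 2 c \<epsilon>)\<close>.
  For \<open>m < m^-\<close> the bias of the coordinates \<open>m < j \<le> m^*\<close> exceeds a large multiple of \<open>\<Phi>^*\<close>,
  and Assumption A keeps a fixed fraction of it in the statistic, so the expected weight is at most
  \<open>exp (-C (1 \<or> r) m^* / 5)\<close>. For \<open>m > m^+\<close> one bounds the weight by the square root of the ratio,
  and the penalty \<open>3 C (m - m^*)\<close> beats the signal of the coordinates beyond \<open>m^*\<close>, which Assumption E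
  bounds by the tail bias. Summing over at most \<open>G_\<epsilon>\<close> dimensions gives the factor \<open>G_\<epsilon>\<close>.
\<close>

lemma normal_density_mult_exp_square:
  fixes sd c b \<mu> y :: real
  assumes sd: "0 < sd" and k: "0 < 1 - 2 * c * sd^2"
  shows "normal_density \<mu> sd y * exp (c * (y - b)^2) =
    exp (c * (\<mu> - b)^2 / (1 - 2 * c * sd^2)) / sqrt (1 - 2 * c * sd^2) *
    normal_density ((\<mu> - 2 * c * sd^2 * b) / (1 - 2 * c * sd^2)) (sd / sqrt (1 - 2 * c * sd^2)) y"
proof -
  define t where "t = 2 * c * sd^2"
  have t: "0 < 1 - t" using k by (simp add: t_def)
  have completed_square: "- ((y - \<mu>)^2) / (2 * sd^2) + c * (y - b)^2 =
      - ((y - (\<mu> - t * b) / (1 - t))^2) / (2 * (sd / sqrt (1 - t))^2) + c * (\<mu> - b)^2 / (1 - t)"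
  proof -
    have sq: "(sd / sqrt (1 - t))^2 = sd^2 / (1 - t)" using t by (simp add: power_divide)
    have c: "c = t / (2 * sd^2)" using sd by (simp add: t_def)
    show ?thesis unfolding sq c using sd t
      by (simp add: field_simps) (simp add: algebra_simps power2_eq_square)
  qed
  have norm_const: "1 / sqrt (2 * pi * (sd / sqrt (1 - t))^2) = sqrt (1 - t) / sqrt (2 * pi * sd^2)"
    using t sd by (simp add: power_divide real_sqrt_divide field_simps)
  have "normal_density \<mu> sd y * exp (c * (y - b)^2) =
      1 / sqrt (2 * pi * sd^2) * exp (- ((y - \<mu>)^2) / (2 * sd^2) + c * (y - b)^2)"
    unfolding normal_density_def exp_add by simp
  also have "\<dots> = exp (c * (\<mu> - b)^2 / (1 - t)) / sqrt (1 - t) *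
      normal_density ((\<mu> - t * b) / (1 - t)) (sd / sqrt (1 - t)) y"
    unfolding completed_square exp_add normal_density_def norm_const using t by (simp add: field_simps)
  finally show ?thesis by (simp add: t_def)
qed

lemma nn_integral_normal_density: "0 < s \<Longrightarrow> (\<integral>\<^sup>+y. ennreal (normal_density m s y) \<partial>lborel) = 1"
  by (subst nn_integral_eq_integral) auto

lemma nn_integral_exp_square_normal:
  fixes sd c b \<mu> :: real
  assumes sd: "0 < sd" and k: "0 < 1 - 2 * c * sd^2"
  shows "(\<integral>\<^sup>+y. ennreal (exp (c * (y - b)^2)) \<partial>density lborel (normal_density \<mu> sd))
     = ennreal (exp (c * (\<mu> - b)^2 / (1 - 2 * c * sd^2)) / sqrt (1 - 2 * c * sd^2))"
proof -
  define K where "K = exp (c * (\<mu> - b)^2 / (1 - 2 * c * sd^2)) / sqrt (1 - 2 * c * sd^2)"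
  have K: "0 \<le> K" using k by (simp add: K_def)
  have "(\<integral>\<^sup>+y. ennreal (exp (c * (y - b)^2)) \<partial>density lborel (normal_density \<mu> sd))
     = (\<integral>\<^sup>+y. ennreal (normal_density \<mu> sd y) * ennreal (exp (c * (y - b)^2)) \<partial>lborel)"
    by (simp add: nn_integral_density)
  also have "\<dots> = (\<integral>\<^sup>+y. ennreal K * ennreal (normal_density ((\<mu> - 2 * c * sd^2 * b) / (1 - 2 * c * sd^2))
                                        (sd / sqrt (1 - 2 * c * sd^2)) y) \<partial>lborel)"
    by (intro nn_integral_cong) (simp add: ennreal_mult''[symmetric] ennreal_mult[symmetric] K
        normal_density_mult_exp_square[OF sd k] K_def)
  also have "\<dots> = ennreal K"
    using sd k by (simp add: nn_integral_cmult nn_integral_normal_density)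
  finally show ?thesis by (simp add: K_def)
qed

lemma nn_integral_PiM_UNIV_prod:
  fixes M :: "nat \<Rightarrow> real measure" and f :: "nat \<Rightarrow> real \<Rightarrow> ennreal"
  assumes P: "\<And>i. prob_space (M i)" and J: "finite J"
    and f: "\<And>i. i \<in> J \<Longrightarrow> f i \<in> borel_measurable (M i)"
  shows "(\<integral>\<^sup>+x. (\<Prod>i\<in>J. f i (x i)) \<partial>PiM UNIV M) = (\<Prod>i\<in>J. integral\<^sup>N (M i) (f i))"
proof -
  interpret product_prob_space M UNIV
    using P by (simp add: product_prob_space_def product_sigma_finite_def
        prob_space_imp_sigma_finite product_prob_space_axioms_def)
  have meas: "(\<lambda>x. \<Prod>i\<in>J. f i (x i)) \<in> borel_measurable (PiM J M)"
  proof (intro borel_measurable_prod_ennreal)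
    fix i assume i: "i \<in> J"
    show "(\<lambda>x. f i (x i)) \<in> borel_measurable (PiM J M)"
      by (rule measurable_compose[OF measurable_component_singleton[OF i, of M] f[OF i]])
  qed
  have "(\<Prod>i\<in>J. integral\<^sup>N (M i) (f i)) = (\<integral>\<^sup>+x. (\<Prod>i\<in>J. f i (x i)) \<partial>PiM J M)"
    using product_nn_integral_prod[OF J f] by simp
  also have "\<dots> = (\<integral>\<^sup>+x. (\<Prod>i\<in>J. f i (x i)) \<partial>distr (PiM UNIV M) (PiM J M) (\<lambda>x. restrict x J))"
    using distr_PiM_restrict_finite[OF J] by simp
  also have "\<dots> = (\<integral>\<^sup>+x. (\<Prod>i\<in>J. f i (restrict x J i)) \<partial>PiM UNIV M)"
    using meas by (intro nn_integral_distr measurable_restrict_subset) simp_all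
  also have "\<dots> = (\<integral>\<^sup>+x. (\<Prod>i\<in>J. f i (x i)) \<partial>PiM UNIV M)"
    by (intro nn_integral_cong prod.cong) auto
  finally show ?thesis by simp
qed

lemma exp_squares_measurable:
  "(\<lambda>Y. K * (\<Prod>j\<in>J. exp (c j * (Y j - b j)^2))) \<in> borel_measurable (data_law lam eps theta)"
  unfolding data_law_def by measurable

lemma nn_integral_data_law_exp_squares_le:
  fixes lam theta c b g :: "nat \<Rightarrow> real" and eps K :: real
  assumes eps: "0 < eps" and J: "finite J" and K: "0 \<le> K"
    and c: "\<And>j. j \<in> J \<Longrightarrow> 0 < 1 - 2 * c j * eps"
    and g: "\<And>j. j \<in> J \<Longrightarrow>
      exp (c j * (lam j * theta j - b j)^2 / (1 - 2 * c j * eps)) / sqrt (1 - 2 * c j * eps) \<le> g j"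
  shows "(\<integral>\<^sup>+Y. ennreal (K * (\<Prod>j\<in>J. exp (c j * (Y j - b j)^2))) \<partial>data_law lam eps theta)
     \<le> ennreal (K * (\<Prod>j\<in>J. g j))"
proof -
  define M where "M = (\<lambda>j. density lborel (normal_density (lam j * theta j) (sqrt eps)))"
  define m where "m = (\<lambda>j. exp (c j * (lam j * theta j - b j)^2 / (1 - 2 * c j * eps)) / sqrt (1 - 2 * c j * eps))"
  have M: "\<And>j. prob_space (M j)" unfolding M_def by (rule prob_space_normal_density) (simp add: eps)
  have data_law: "data_law lam eps theta = PiM UNIV M" by (simp add: data_law_def M_def)
  have fm: "\<And>j. (\<lambda>y. ennreal (exp (c j * (y - b j)^2))) \<in> borel_measurable (M j)"
    unfolding M_def by simp
  have meas: "(\<lambda>Y. \<Prod>j\<in>J. ennreal (exp (c j * (Y j - b j)^2))) \<in> borel_measurable (PiM UNIV M)"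
    by (intro borel_measurable_prod_ennreal measurable_compose[OF measurable_component_singleton[of _ UNIV M] fm]) simp
  have m: "\<And>j. j \<in> J \<Longrightarrow> 0 \<le> m j"
    using c by (force simp: m_def intro!: divide_nonneg_nonneg)
  have moment: "integral\<^sup>N (M j) (\<lambda>y. ennreal (exp (c j * (y - b j)^2))) = ennreal (m j)" if j: "j \<in> J" for j
  proof -
    have "0 < 1 - 2 * c j * (sqrt eps)^2" using c[OF j] eps by simp
    then show ?thesis
      unfolding M_def m_def using nn_integral_exp_square_normal[of "sqrt eps"] eps by simp
  qed
  have "(\<integral>\<^sup>+Y. ennreal (K * (\<Prod>j\<in>J. exp (c j * (Y j - b j)^2))) \<partial>data_law lam eps theta)
     = ennreal K * (\<integral>\<^sup>+Y. (\<Prod>j\<in>J. ennreal (exp (c j * (Y j - b j)^2))) \<partial>PiM UNIV M)"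
    unfolding data_law by (subst nn_integral_cmult[OF meas, symmetric])
      (auto intro!: nn_integral_cong simp: ennreal_mult K prod_nonneg prod_ennreal)
  also have "\<dots> = ennreal K * (\<Prod>j\<in>J. ennreal (m j))"
    by (simp add: nn_integral_PiM_UNIV_prod[OF M J fm] moment)
  also have "\<dots> = ennreal (K * (\<Prod>j\<in>J. m j))"
    using m K by (simp add: prod_ennreal ennreal_mult prod_nonneg)
  also have "\<dots> \<le> ennreal (K * (\<Prod>j\<in>J. g j))"
    using m g K by (intro ennreal_leI mult_left_mono prod_mono) (auto simp: m_def)
  finally show ?thesis .
qed

lemma integral_le_sum_of_nn_integral_bounds:
  fixes F :: "'a \<Rightarrow> real" and B :: "nat \<Rightarrow> 'a \<Rightarrow> real" and \<beta> :: "nat \<Rightarrow> real"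
  assumes S: "finite S" and F_nonneg: "\<And>x. 0 \<le> F x"
    and F_le: "\<And>x. F x \<le> (\<Sum>m\<in>S. B m x)"
    and B_nonneg: "\<And>m x. 0 \<le> B m x"
    and B_meas: "\<And>m. m \<in> S \<Longrightarrow> B m \<in> borel_measurable P"
    and B_int: "\<And>m. m \<in> S \<Longrightarrow> (\<integral>\<^sup>+x. ennreal (B m x) \<partial>P) \<le> ennreal (\<beta> m)"
    and \<beta>: "\<And>m. 0 \<le> \<beta> m"
  shows "integral\<^sup>L P F \<le> (\<Sum>m\<in>S. \<beta> m)"
proof (cases "integrable P F")
  case False
  then show ?thesis by (simp add: not_integrable_integral_eq sum_nonneg \<beta>)
next
  case True
  have "(\<integral>\<^sup>+x. ennreal (F x) \<partial>P) \<le> (\<integral>\<^sup>+x. (\<Sum>m\<in>S. ennreal (B m x)) \<partial>P)"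
  proof (rule nn_integral_mono)
    fix x
    have "ennreal (F x) \<le> ennreal (\<Sum>m\<in>S. B m x)" using F_le by (rule ennreal_leI)
    then show "ennreal (F x) \<le> (\<Sum>m\<in>S. ennreal (B m x))" by (simp add: B_nonneg)
  qed
  also have "\<dots> = (\<Sum>m\<in>S. (\<integral>\<^sup>+x. ennreal (B m x) \<partial>P))"
    by (rule nn_integral_sum) (auto intro!: measurable_compose[OF B_meas])
  also have "\<dots> \<le> (\<Sum>m\<in>S. ennreal (\<beta> m))"
    by (intro sum_mono B_int)
  also have "\<dots> = ennreal (\<Sum>m\<in>S. \<beta> m)" by (simp add: \<beta>)
  finally have "(\<integral>\<^sup>+x. ennreal (F x) \<partial>P) \<le> ennreal (\<Sum>m\<in>S. \<beta> m)" .
  moreover have "integral\<^sup>L P F = enn2real (\<integral>\<^sup>+x. ennreal (F x) \<partial>P)"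
    using True by (intro integral_eq_nn_integral) (auto simp: F_nonneg)
  ultimately show ?thesis by (simp add: enn2real_leI sum_nonneg \<beta>)
qed

lemma shrinkage_term_eq:
  fixes l e t et y :: real
  assumes "l \<noteq> 0" "0 < t" "0 < e"
  shows "((1 / (l^2 / e + 1 / t)) * (et / t + l * y / e) - et)^2 / (1 / (l^2 / e + 1 / t))
     = (1 / (l^2 / e + 1 / t)) * l^2 / e * (y - l * et)^2 / e"
proof -
  define s where "s = 1 / (l^2 / e + 1 / t)"
  have "0 < l^2 / e + 1 / t" using assms by (simp add: add_pos_pos)
  then have s: "0 < s" "s * (l^2 / e + 1 / t) = 1" by (simp_all add: s_def)
  have st: "s / t = 1 - s * l^2 / e" using s(2) by (simp add: field_simps)
  have "s * (et / t + l * y / e) - et = et * (s / t) + s * l * y / e - et"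
    by (simp add: algebra_simps)
  also have "\<dots> = s * l * (y - l * et) / e"
    unfolding st using assms by (simp add: field_simps power2_eq_square)
  finally have eq: "s * (et / t + l * y / e) - et = s * l * (y - l * et) / e" .
  show ?thesis
    unfolding s_def[symmetric] eq using s assms by (simp add: power2_eq_square field_simps)
qed

lemma sig_norm_sq_eq:
  assumes lam: "\<And>j. 1 \<le> j \<Longrightarrow> lam j \<noteq> 0" and tau: "\<And>j. 1 \<le> j \<Longrightarrow> 0 < tau j" and eps: "0 < eps"
  shows "sig_norm_sq lam eps eta tau Y m =
     (\<Sum>j=1..m. sig lam eps tau j * (lam j)^2 / eps * (Y j - lam j * eta j)^2 / eps)"
  unfolding sig_norm_sq_def
proof (intro sum.cong refl)
  fix j assume j: "j \<in> {1..m}"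
  then show "(theta_hat lam eps eta tau Y m j - eta j)^2 / sig lam eps tau j =
     sig lam eps tau j * (lam j)^2 / eps * (Y j - lam j * eta j)^2 / eps"
    using shrinkage_term_eq[OF lam tau eps, of j j "eta j" "Y j"]
    by (simp add: theta_hat_def thetaY_def sig_def)
qed

lemma sum_atLeastAtMost_split_Ioc:
  fixes q :: "nat \<Rightarrow> real"
  assumes "m \<le> n"
  shows "(\<Sum>j=1..n. q j) = (\<Sum>j=1..m. q j) + (\<Sum>j\<in>{m<..n}. q j)"
proof -
  have "{1..n} = {1..m} \<union> {m<..n}" using assms by auto
  moreover have "{1..m} \<inter> {m<..n} = {}" by auto
  ultimately show ?thesis by (simp add: sum.union_disjoint)
qed

lemma normalised_exp_weight_le_below:
  fixes N q :: "nat \<Rightarrow> real" and C :: real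
  assumes N: "\<And>k. N k = (\<Sum>j=1..k. q j)" and m: "1 \<le> m" "m < m'" and G: "m' \<le> G"
  shows "exp ((N m - 3 * C * real m) / 2) / (\<Sum>k=1..G. exp ((N k - 3 * C * real k) / 2))
     \<le> exp (3 * C * (real m' - real m) / 2) * (\<Prod>j\<in>{m<..m'}. exp (- q j / 2))"
proof -
  let ?E = "\<lambda>k. exp ((N k - 3 * C * real k) / 2)"
  have E_le: "?E m' \<le> (\<Sum>k=1..G. ?E k)"
    by (rule member_le_sum) (use m G in auto)
  then have "0 < (\<Sum>k=1..G. ?E k)" by (rule less_le_trans[OF exp_gt_zero])
  then have "?E m / (\<Sum>k=1..G. ?E k) \<le> ?E m / ?E m'"
    using E_le by (intro divide_left_mono) auto
  also have "\<dots> = exp ((N m - N m' + 3 * C * (real m' - real m)) / 2)"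
    by (simp add: exp_diff[symmetric] diff_divide_distrib algebra_simps)
  also have "N m - N m' = (\<Sum>j\<in>{m<..m'}. - q j)"
    using sum_atLeastAtMost_split_Ioc[of m m' q] m by (simp add: N sum_negf)
  also have "exp (((\<Sum>j\<in>{m<..m'}. - q j) + 3 * C * (real m' - real m)) / 2)
      = exp (3 * C * (real m' - real m) / 2) * (\<Prod>j\<in>{m<..m'}. exp (- q j / 2))"
    by (simp add: exp_sum[symmetric] exp_add[symmetric] add_divide_distrib sum_divide_distrib)
  finally show ?thesis .
qed

lemma sqrt_exp: "sqrt (exp x) = exp (x / 2)"
proof -
  have "exp x = (exp (x / 2))^2" by (simp add: power2_eq_square exp_add[symmetric])
  then show ?thesis by simp
qed

text \<open>Above the reference dimension the ratio alone is too crude (the Gaussian moment of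
  \<open>exp (q_j / 2)\<close> may be infinite); since the weight is at most \<open>1\<close>, its square root still bounds it.\<close>

lemma normalised_exp_weight_le_above:
  fixes N q :: "nat \<Rightarrow> real" and C :: real
  assumes N: "\<And>k. N k = (\<Sum>j=1..k. q j)" and m: "1 \<le> m'" "m' < m" and G: "m \<le> G"
  shows "exp ((N m - 3 * C * real m) / 2) / (\<Sum>k=1..G. exp ((N k - 3 * C * real k) / 2))
     \<le> exp (- 3 * C * (real m - real m') / 4) * (\<Prod>j\<in>{m'<..m}. exp (q j / 4))"
proof -
  let ?E = "\<lambda>k. exp ((N k - 3 * C * real k) / 2)"
  let ?D = "\<Sum>k=1..G. ?E k"
  define p where "p = ?E m / ?D"
  have E'_le: "?E m' \<le> ?D" and E_le: "?E m \<le> ?D"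
    by (rule member_le_sum; use m G in auto)+
  have D: "0 < ?D" by (rule less_le_trans[OF exp_gt_zero E'_le])
  have p: "0 \<le> p" "p \<le> 1" using E_le D by (simp_all add: p_def)
  have "p \<le> sqrt p"
    using p by (simp add: real_le_rsqrt power2_eq_square mult_left_le)
  also have "\<dots> \<le> sqrt (?E m / ?E m')"
    unfolding p_def using E'_le D by (intro real_sqrt_le_mono divide_left_mono) auto
  also have "?E m / ?E m' = exp ((N m - N m' - 3 * C * (real m - real m')) / 2)"
    by (simp add: exp_diff[symmetric] diff_divide_distrib algebra_simps)
  also have "N m - N m' = (\<Sum>j\<in>{m'<..m}. q j)"
    using sum_atLeastAtMost_split_Ioc[of m' m q] m by (simp add: N)
  finally show ?thesis unfolding p_def
    by (simp add: sqrt_exp exp_sum[symmetric] exp_add[symmetric] sum_divide_distrib[symmetric] field_simps)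
qed

lemma shrinkage_weight_bounds:
  fixes l e t :: real
  assumes "l \<noteq> 0" "0 < t" "0 < e"
  shows "0 < 1 / (l^2 / e + 1 / t) * l^2 / e" "1 / (l^2 / e + 1 / t) * l^2 / e \<le> 1"
proof -
  have x: "0 < l^2 / e" and y: "0 < 1 / t" using assms by simp_all
  have D: "0 < l^2 / e + 1 / t" by (rule add_pos_pos[OF x y])
  have eq: "1 / (l^2 / e + 1 / t) * l^2 / e = (l^2 / e) / (l^2 / e + 1 / t)" by simp
  show "0 < 1 / (l^2 / e + 1 / t) * l^2 / e"
    unfolding eq using x D by (rule divide_pos_pos)
  show "1 / (l^2 / e + 1 / t) * l^2 / e \<le> 1"
    unfolding eq using y D by (simp only: divide_le_eq_1_pos)
qed

lemma shrinkage_weight_ge: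
  fixes l e t d :: real
  assumes "l \<noteq> 0" "0 < t" "0 < e" "0 < d" "d * (e * (1 / l^2)) \<le> t"
  shows "d / (1 + d) \<le> 1 / (l^2 / e + 1 / t) * l^2 / e"
proof -
  define x where "x = l^2 / e"
  have x: "0 < x" using assms by (simp add: x_def)
  have "d / x \<le> t" using assms(5) by (simp add: x_def field_simps)
  then have yx: "1 / t \<le> x / d" using x assms by (simp add: field_simps)
  have "x + x / d = x * (1 + d) / d" using assms(4) by (simp add: field_simps)
  then have "d / (1 + d) = x / (x + x / d)"
    using x assms(4) by simp
  also have "\<dots> \<le> x / (x + 1 / t)"
    using x yx assms by (intro divide_left_mono mult_pos_pos add_pos_pos) auto
  finally show ?thesis by (simp add: x_def ac_simps)
qed

lemma gaussian_factor_le_below: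
  fixes w \<nu> :: real
  assumes "0 < w" "w \<le> 1" "0 \<le> \<nu>"
  shows "exp ((- w * \<nu> / 2) / (1 + w)) / sqrt (1 + w) \<le> exp (- w * \<nu> / 4)"
proof -
  have "exp ((- w * \<nu> / 2) / (1 + w)) / sqrt (1 + w) \<le> exp ((- w * \<nu> / 2) / (1 + w))"
    using assms by (simp add: divide_le_eq)
  also have "(- w * \<nu> / 2) / (1 + w) \<le> - w * \<nu> / 4"
    using assms mult_left_mono[of "1 + w" 2 "w * \<nu>"] by (simp add: field_simps)
  finally show ?thesis by simp
qed

lemma gaussian_factor_le_above:
  fixes w \<nu> :: real
  assumes "0 < w" "w \<le> 1" "0 \<le> \<nu>"
  shows "exp ((w * \<nu> / 4) / (1 - w / 2)) / sqrt (1 - w / 2) \<le> exp (1 / 2 + \<nu> / 2)"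
proof -
  have "1 / sqrt (1 - w / 2) \<le> 1 / sqrt (1 / 2)"
    using assms by (intro divide_left_mono) auto
  also have "\<dots> = sqrt 2" by (simp add: real_sqrt_divide)
  also have "\<dots> \<le> sqrt (exp 1)"
    using exp_ge_add_one_self[of 1] by simp
  also have "\<dots> = exp (1 / 2)" by (simp add: sqrt_exp)
  finally have "1 / sqrt (1 - w / 2) \<le> exp (1 / 2)" .
  moreover have "(w * \<nu> / 4) / (1 - w / 2) \<le> \<nu> / 2"
    using assms mult_right_mono[of w "2 - w" \<nu>] by (simp add: field_simps)
  ultimately have "exp ((w * \<nu> / 4) / (1 - w / 2)) * (1 / sqrt (1 - w / 2)) \<le> exp (\<nu> / 2) * exp (1 / 2)"
    using assms by (intro mult_mono) auto
  then show ?thesis by (simp add: exp_add mult.commute)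
qed

lemma antimono_from_1:
  fixes a :: "nat \<Rightarrow> real"
  assumes mono: "\<forall>j\<ge>1. a (Suc j) \<le> a j" and "1 \<le> i" "i \<le> j"
  shows "a j \<le> a i"
  using assms(3)
proof (induction j rule: dec_induct)
  case (step n)
  then show ?case using mono assms(2) by (meson dual_order.trans le_trans)
qed simp

locale ellipsoid_member =
  fixes a eta theta :: "nat \<Rightarrow> real" and r :: real
  assumes a_pos: "\<forall>j\<ge>1. 0 < a j" and a_mono: "\<forall>j\<ge>1. a (Suc j) \<le> a j" and a_one: "a 1 = 1"
    and theta_in: "theta \<in> Theta_a a eta r"
begin

lemma weighted_dev_summable: "summable (\<lambda>j. (theta (j + 1) - eta (j + 1))^2 / a (j + 1))"
  and weighted_dev_sum_le: "(\<Sum>j. (theta (j + 1) - eta (j + 1))^2 / a (j + 1)) \<le> r"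
  using theta_in by (simp_all add: Theta_a_def)

lemma dev_summable: "summable (\<lambda>j. (theta (j + 1) - eta (j + 1))^2)"
proof (rule summable_comparison_test'[OF weighted_dev_summable])
  fix n :: nat
  have "0 < a (n + 1)" "a (n + 1) \<le> 1"
    using a_pos antimono_from_1[OF a_mono, of 1 "n + 1"] a_one by auto
  then show "norm ((theta (n + 1) - eta (n + 1))^2) \<le> (theta (n + 1) - eta (n + 1))^2 / a (n + 1)"
    by (simp add: le_divide_eq mult_left_le)
qed

lemma dev_tail_summable: "summable (\<lambda>i. (theta (i + n + 1) - eta (i + n + 1))^2)"
  using dev_summable summable_iff_shift[of "\<lambda>j. (theta (j + 1) - eta (j + 1))^2" n]
  by (simp add: add.assoc)

lemma b_bias_nonneg: "0 \<le> b_bias theta eta n"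
  unfolding b_bias_def by (rule suminf_nonneg[OF dev_tail_summable]) simp

lemma b_bias_Suc: "b_bias theta eta n = (theta (n + 1) - eta (n + 1))^2 + b_bias theta eta (Suc n)"
  using suminf_split_head[OF dev_tail_summable[of n]] by (simp add: b_bias_def)

lemma b_bias_split:
  "m \<le> n \<Longrightarrow> b_bias theta eta m = (\<Sum>j\<in>{m<..n}. (theta j - eta j)^2) + b_bias theta eta n"
proof (induction n rule: dec_induct)
  case (step n)
  have "{m<..Suc n} = insert (Suc n) {m<..n}" using step.hyps by auto
  then show ?case using step.IH b_bias_Suc[of n] by simp
qed simp

lemma b_bias_le: "b_bias theta eta n \<le> r * a (n + 1)"
proof -
  define v where "v = (\<lambda>j. (theta (j + 1) - eta (j + 1))^2 / a (j + 1))"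
  have v: "0 \<le> v j" for j
  proof -
    have "0 < a (j + 1)" using a_pos by simp
    then show ?thesis by (simp add: v_def)
  qed
  have a: "0 \<le> a (n + 1)" using a_pos by (simp add: less_imp_le)
  have v_tail: "summable (\<lambda>i. v (i + n))"
    using summable_iff_shift[of v n] weighted_dev_summable by (simp add: v_def)
  have "b_bias theta eta n \<le> (\<Sum>i. a (n + 1) * v (i + n))"
    unfolding b_bias_def
  proof (rule suminf_le[OF _ dev_tail_summable])
    fix i
    have a_i: "0 < a (i + n + 1)" "a (i + n + 1) \<le> a (n + 1)"
      using a_pos antimono_from_1[OF a_mono] by auto
    then have "(theta (i + n + 1) - eta (i + n + 1))^2 = a (i + n + 1) * v (i + n)"
      by (simp add: v_def add.assoc)
    also have "\<dots> \<le> a (n + 1) * v (i + n)" using a_i v by (intro mult_right_mono)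
    finally show "(theta (i + n + 1) - eta (i + n + 1))^2 \<le> a (n + 1) * v (i + n)" .
  next
    show "summable (\<lambda>i. a (n + 1) * v (i + n))"
      using v_tail by (rule summable_mult)
  qed
  also have "\<dots> = a (n + 1) * (\<Sum>i. v (i + n))"
    using v_tail by (rule suminf_mult)
  also have "(\<Sum>i. v (i + n)) \<le> suminf v"
    using suminf_split_initial_segment[of v n] weighted_dev_summable v
    by (simp add: v_def sum_nonneg)
  then have "a (n + 1) * (\<Sum>i. v (i + n)) \<le> a (n + 1) * r"
    using weighted_dev_sum_le a by (intro mult_left_mono) (auto simp: v_def)
  finally show ?thesis by (simp add: mult.commute)
qed

end

lemma exists_minimiser_from_1:
  fixes f :: "nat \<Rightarrow> real"
  assumes c: "0 < c" and f: "\<And>k. 1 \<le> k \<Longrightarrow> c * real k \<le> f k"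
  shows "\<exists>m\<ge>1. \<forall>k\<ge>1. f m \<le> f k"
proof -
  define N where "N = nat \<lceil>f 1 / c\<rceil> + 1"
  have "Min (f ` {1..N}) \<in> f ` {1..N}" by (intro Min_in) (auto simp: N_def)
  then obtain m where m: "m \<in> {1..N}" "f m = Min (f ` {1..N})" by auto
  have "f m \<le> f k" if k: "1 \<le> k" for k
  proof (cases "k \<le> N")
    case True
    then show ?thesis using k m by simp
  next
    case False
    have "f m \<le> f 1" using m by (simp add: N_def)
    also have "f 1 / c \<le> real (nat \<lceil>f 1 / c\<rceil>)" by linarith
    then have "f 1 / c < real k" using False by (simp add: N_def)
    then have "f 1 < c * real k" using c by (simp add: field_simps)
    also have "\<dots> \<le> f k" by (rule f[OF k])
    finally show ?thesis by simp
  qed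
  then show ?thesis using m by auto
qed

lemma m_star_ge_1:
  assumes lam_bdd: "\<exists>B. \<forall>j. \<bar>lam j\<bar> \<le> B" and lam_nz: "\<forall>j\<ge>1. lam j \<noteq> 0" and eps: "0 < eps"
  shows "1 \<le> m_star a lam eps"
proof -
  obtain B where B: "\<forall>j. \<bar>lam j\<bar> \<le> B" using lam_bdd by blast
  have B_pos: "0 < B" using B[rule_format, of 1] lam_nz by auto
  have Lam_ge: "1 / B^2 \<le> Lam lam j" if "1 \<le> j" for j
  proof -
    have "\<bar>lam j\<bar> \<le> \<bar>B\<bar>" using B B_pos by simp
    then have "(lam j)^2 \<le> B^2" by (simp add: abs_le_square_iff)
    then show ?thesis unfolding Lam_def using lam_nz that by (simp add: frac_le)
  qed
  have "eps / B^2 * real k \<le> Phi a lam eps k" if k: "1 \<le> k" for k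
  proof -
    have "real k * (1 / B^2) \<le> (\<Sum>j=1..k. Lam lam j)"
      using sum_mono[of "{1..k}" "\<lambda>_. 1 / B^2" "Lam lam"] Lam_ge by simp
    then have "eps * (real k * (1 / B^2)) \<le> eps * (\<Sum>j=1..k. Lam lam j)"
      using eps by (intro mult_left_mono) auto
    moreover have "eps * real k * Lam_bar lam k = eps * (\<Sum>j=1..k. Lam lam j)"
      using k by (simp add: Lam_bar_def)
    ultimately have "eps / B^2 * real k \<le> eps * real k * Lam_bar lam k" using eps by (auto simp: mult.assoc)
    then show ?thesis unfolding Phi_def by linarith
  qed
  then have "\<exists>m\<ge>1. \<forall>k\<ge>1. Phi a lam eps m \<le> Phi a lam eps k"
    using eps B_pos by (intro exists_minimiser_from_1[of "eps / B^2"]) auto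
  then have ex: "\<exists>m. 1 \<le> m \<and> (\<forall>k\<ge>1. Phi a lam eps m \<le> Phi a lam eps k)" by blast
  show ?thesis unfolding m_star_def using LeastI_ex[OF ex] by simp
qed

locale posterior_setting = ellipsoid_member a eta theta r
  for a eta theta :: "nat \<Rightarrow> real" and r :: real +
  fixes lam tau :: "nat \<Rightarrow> real" and eps d C L :: real
  assumes lam_bdd: "\<exists>B. \<forall>j. \<bar>lam j\<bar> \<le> B" and lam_nz: "\<forall>j\<ge>1. lam j \<noteq> 0"
    and tau_pos: "\<forall>j\<ge>1. 0 < tau j" and eps_pos: "0 < eps" and d_pos: "0 < d"
    and tau_ge: "\<forall>j\<in>{1..G_eps lam eps}. d * max (sqrt eps * sqrt (Lam lam j)) (eps * Lam lam j) \<le> tau j"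
    and C_ge: "1 \<le> C" and L_ge: "1 \<le> L"
    and lam_sq_tail: "\<forall>k\<ge>1. \<forall>j>k. \<forall>i\<in>{1..k}. (lam j)^2 \<le> C * (lam i)^2"
    and Lam_max_le: "\<forall>k\<ge>1. Lam_max lam k / Lam_bar lam k \<le> L"
    and m_star_le_G: "m_star a lam eps \<le> G_eps lam eps"
begin

abbreviation "G \<equiv> G_eps lam eps"
abbreviation "ms \<equiv> m_star a lam eps"
abbreviation "Ps \<equiv> Phi_star a lam eps"
abbreviation "rr \<equiv> max 1 r"
abbreviation "LM \<equiv> Lam_max lam ms"

definition weight :: "nat \<Rightarrow> real" where
  "weight j = sig lam eps tau j * (lam j)^2 / eps"

definition chi_square :: "(nat \<Rightarrow> real) \<Rightarrow> nat \<Rightarrow> real" where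
  "chi_square Y k = (\<Sum>j=1..k. weight j * (Y j - lam j * eta j)^2 / eps)"

text \<open>\<open>Y_j - \<lambda>_j \<eta>_j\<close> has mean \<open>\<lambda>_j (\<theta>_j - \<eta>_j)\<close> and variance \<open>\<epsilon>\<close>, so \<open>signal j\<close> is the noncentrality
  of \<open>(Y_j - \<lambda>_j \<eta>_j)^2 / \<epsilon>\<close>.\<close>

definition signal :: "nat \<Rightarrow> real" where
  "signal j = (lam j)^2 * (theta j - eta j)^2 / eps"

definition scale :: real where
  "scale = Ps / (eps * LM)"

definition rate :: real where
  "rate = exp (- (C * rr / 5) * real ms)"

definition threshold :: real where
  "threshold = 8 * L * C * (1 + 1 / d) * rr * Ps"

lemma one_le_m_star: "1 \<le> ms"
  using m_star_ge_1[OF lam_bdd lam_nz eps_pos] .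

lemma Lam_pos: "1 \<le> j \<Longrightarrow> 0 < Lam lam j"
  using lam_nz by (simp add: Lam_def)

lemma Lam_le_LM: "j \<in> {1..ms} \<Longrightarrow> Lam lam j \<le> LM"
  unfolding Lam_max_def by (intro Max_ge) auto

lemma LM_attained: "\<exists>i\<in>{1..ms}. Lam lam i = LM"
proof -
  have "LM \<in> Lam lam ` {1..ms}"
    unfolding Lam_max_def using one_le_m_star by (intro Max_in) auto
  then show ?thesis by auto
qed

lemma LM_pos: "0 < LM"
proof -
  obtain i where "i \<in> {1..ms}" "Lam lam i = LM" using LM_attained ..
  then show ?thesis using Lam_pos[of i] by simp
qed

lemma lam_sq_beyond_m_star: "ms < j \<Longrightarrow> (lam j)^2 \<le> C / LM"
proof -
  assume j: "ms < j"
  obtain i where i: "i \<in> {1..ms}" "Lam lam i = LM" using LM_attained ..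
  then have "(lam i)^2 = 1 / LM" by (metis Lam_def inverse_eq_divide inverse_inverse_eq)
  moreover have "(lam j)^2 \<le> C * (lam i)^2" using lam_sq_tail one_le_m_star i(1) j by blast
  ultimately show ?thesis by simp
qed

lemma Phi_star_ge: "a ms \<le> Ps" "eps * real ms * Lam_bar lam ms \<le> Ps"
  by (simp_all add: Phi_star_def Phi_def)

lemma Phi_star_pos: "0 < Ps"
  using Phi_star_ge(1) a_pos one_le_m_star by (meson less_le_trans)

lemma scale_pos: "0 < scale"
  using Phi_star_pos eps_pos LM_pos by (simp add: scale_def)

lemma m_star_le_scale: "real ms \<le> L * scale"
proof -
  have "0 < (\<Sum>j=1..ms. Lam lam j)" using one_le_m_star Lam_pos by (intro sum_pos) auto
  then have "0 < Lam_bar lam ms" using one_le_m_star by (simp add: Lam_bar_def)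
  then have "LM \<le> L * Lam_bar lam ms"
    using Lam_max_le one_le_m_star by (simp add: divide_le_eq)
  then have "eps * real ms * LM \<le> L * (eps * real ms * Lam_bar lam ms)"
    using eps_pos mult_left_mono[of LM "L * Lam_bar lam ms" "eps * real ms"] by (simp add: ac_simps)
  also have "\<dots> \<le> L * Ps" using Phi_star_ge(2) L_ge by (intro mult_left_mono) auto
  finally show ?thesis using eps_pos LM_pos by (simp add: scale_def field_simps)
qed

lemma b_bias_m_star_le: "b_bias theta eta ms \<le> rr * Ps"
proof -
  have "b_bias theta eta ms \<le> r * a (ms + 1)" by (rule b_bias_le)
  also have "\<dots> \<le> rr * a (ms + 1)" using a_pos[rule_format, of "ms + 1"] by (intro mult_right_mono) auto
  also have "\<dots> \<le> rr * Ps"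
    using a_mono one_le_m_star Phi_star_ge(1) by (intro mult_left_mono) auto
  finally show ?thesis .
qed

lemma weight_pos: "1 \<le> j \<Longrightarrow> 0 < weight j"
  and weight_le_1: "1 \<le> j \<Longrightarrow> weight j \<le> 1"
  using shrinkage_weight_bounds[of "lam j" "tau j" eps] lam_nz tau_pos eps_pos
  by (simp_all add: weight_def sig_def)

lemma weight_ge: "j \<in> {1..G} \<Longrightarrow> d / (1 + d) \<le> weight j"
proof -
  assume j: "j \<in> {1..G}"
  have "d * (eps * Lam lam j) \<le> d * max (sqrt eps * sqrt (Lam lam j)) (eps * Lam lam j)"
    using d_pos by (intro mult_left_mono) auto
  also have "\<dots> \<le> tau j" using tau_ge j by blast
  finally have "d * (eps * Lam lam j) \<le> tau j" .
  then show ?thesis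
    using shrinkage_weight_ge[of "lam j" "tau j" eps d] lam_nz tau_pos eps_pos d_pos j
    by (simp add: weight_def sig_def Lam_def)
qed

lemma signal_nonneg: "0 \<le> signal j"
  using eps_pos by (simp add: signal_def)

lemma post_eq_chi_square:
  "post lam eps eta tau C Y m =
     exp ((chi_square Y m - 3 * C * real m) / 2) / (\<Sum>k=1..G. exp ((chi_square Y k - 3 * C * real k) / 2))"
  using sig_norm_sq_eq[of lam tau eps eta Y] lam_nz tau_pos eps_pos
  by (simp add: post_def weight_def chi_square_def)

lemma post_nonneg: "0 \<le> post lam eps eta tau C Y m"
  unfolding post_def by (intro divide_nonneg_nonneg sum_nonneg) auto

lemma expected_post_sum_le:
  fixes B :: "nat \<Rightarrow> (nat \<Rightarrow> real) \<Rightarrow> real"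
  assumes S: "S \<subseteq> {1..G}"
    and post_le: "\<And>m Y. m \<in> S \<Longrightarrow> post lam eps eta tau C Y m \<le> B m Y"
    and B_nonneg: "\<And>m Y. 0 \<le> B m Y"
    and B_meas: "\<And>m. m \<in> S \<Longrightarrow> B m \<in> borel_measurable (data_law lam eps theta)"
    and B_int: "\<And>m. m \<in> S \<Longrightarrow> (\<integral>\<^sup>+Y. ennreal (B m Y) \<partial>data_law lam eps theta) \<le> ennreal rate"
  shows "(\<integral>Y. (\<Sum>m\<in>S. post lam eps eta tau C Y m) \<partial>data_law lam eps theta)
     \<le> 2 * exp (- (C * rr / 5) * real ms + ln (real G))"
proof -
  have S_fin: "finite S" using S finite_subset by blast
  have "(\<integral>Y. (\<Sum>m\<in>S. post lam eps eta tau C Y m) \<partial>data_law lam eps theta) \<le> (\<Sum>m\<in>S. rate)"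
    using S_fin post_le B_nonneg B_meas B_int
    by (intro integral_le_sum_of_nn_integral_bounds[where B = B])
      (auto simp: rate_def post_nonneg intro!: sum_nonneg sum_mono)
  also have "\<dots> \<le> real G * rate"
    using card_mono[OF _ S] by (simp add: rate_def mult_right_mono)
  also have "\<dots> = exp (- (C * rr / 5) * real ms + ln (real G))"
    using one_le_m_star m_star_le_G by (subst exp_add) (simp add: rate_def)
  also have "\<dots> \<le> 2 * exp (- (C * rr / 5) * real ms + ln (real G))" by simp
  finally show ?thesis .
qed

lemma m_minus_eq: "m_minus a lam eps theta eta C L d r = (LEAST m. m \<in> {1..ms} \<and> b_bias theta eta m \<le> threshold)"
  by (simp add: m_minus_def threshold_def)

lemma threshold_ge: "rr * Ps \<le> threshold"
proof -
  have "1 \<le> L * C" using mult_mono[of 1 L 1 C] L_ge C_ge by simp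
  moreover have "1 \<le> 1 + 1 / d" using d_pos by simp
  ultimately have "1 \<le> 8 * (L * C) * (1 + 1 / d)" using mult_mono[of 1 "L * C" 1 "1 + 1 / d"] by simp
  then have "1 * (rr * Ps) \<le> 8 * (L * C) * (1 + 1 / d) * (rr * Ps)"
    using Phi_star_pos by (intro mult_right_mono) auto
  then show ?thesis by (simp add: threshold_def ac_simps)
qed

lemma m_minus_le_m_star: "m_minus a lam eps theta eta C L d r \<le> ms"
  unfolding m_minus_eq using one_le_m_star b_bias_m_star_le threshold_ge by (intro Least_le) auto

lemma threshold_lt_b_bias:
  assumes "1 \<le> m" "m < m_minus a lam eps theta eta C L d r"
  shows "threshold < b_bias theta eta m"
  using not_less_Least[OF assms(2)[unfolded m_minus_eq]] assms m_minus_le_m_star by auto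

lemma threshold_margin: "7 * (L * C * (rr * Ps)) \<le> d / (1 + d) * (threshold - rr * Ps)"
proof -
  define D where "D = d / (1 + d)"
  have D: "0 \<le> D" "D \<le> 1" using d_pos by (simp_all add: D_def)
  have "0 < d + d * d" using d_pos by (simp add: add_pos_pos)
  then have "D * (1 + 1 / d) = 1" using d_pos by (simp add: D_def field_simps)
  moreover have "D * threshold = 8 * (L * C * (rr * Ps)) * (D * (1 + 1 / d))"
    by (simp add: threshold_def algebra_simps)
  ultimately have D_threshold: "D * threshold = 8 * (L * C * (rr * Ps))" by simp
  have LC: "1 \<le> L * C" using mult_mono[of 1 L 1 C] L_ge C_ge by simp
  have P: "0 \<le> rr * Ps" using Phi_star_pos by simp
  have "D * (rr * Ps) \<le> rr * Ps" using D P by (intro mult_left_le_one_le)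
  moreover have "rr * Ps \<le> (L * C) * (rr * Ps)" using mult_right_mono[OF LC P] by simp
  ultimately show ?thesis
    unfolding D_def[symmetric] right_diff_distrib D_threshold by linarith
qed

text \<open>Below \<open>m^-\<close> the bias missing between \<open>m\<close> and \<open>m^*\<close> exceeds the threshold, and every one of
  these coordinates carries at least the fraction \<open>d / (1 + d)\<close> of its signal into the statistic.\<close>

lemma sum_weight_signal_ge:
  assumes m: "1 \<le> m" "m < ms" and b: "threshold < b_bias theta eta m"
  shows "7 * C * rr * real ms \<le> (\<Sum>j\<in>{m<..ms}. weight j * signal j)"
proof -
  define D where "D = d / (1 + d)"
  define u where "u j = (theta j - eta j)^2" for j
  have D: "0 \<le> D" using d_pos by (simp add: D_def)
  have "7 * (L * C * (rr * Ps)) \<le> D * (threshold - rr * Ps)"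
    unfolding D_def by (rule threshold_margin)
  also have "threshold - rr * Ps \<le> (\<Sum>j\<in>{m<..ms}. u j)"
    using b b_bias_split[of m ms] b_bias_m_star_le m by (simp add: u_def)
  then have "D * (threshold - rr * Ps) \<le> D * (\<Sum>j\<in>{m<..ms}. u j)" using D by (intro mult_left_mono)
  finally have sum_u: "7 * (L * C * (rr * Ps)) \<le> D * (\<Sum>j\<in>{m<..ms}. u j)" .
  have "7 * C * rr * real ms \<le> 7 * C * rr * (L * scale)"
    using m_star_le_scale C_ge by (intro mult_left_mono) auto
  also have "\<dots> = 7 * (L * C * (rr * Ps)) / (eps * LM)" by (simp add: scale_def)
  also have "\<dots> \<le> D * (\<Sum>j\<in>{m<..ms}. u j) / (eps * LM)"
    using sum_u eps_pos LM_pos by (intro divide_right_mono) auto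
  also have "\<dots> = (\<Sum>j\<in>{m<..ms}. D * (u j / (eps * LM)))"
    by (simp add: sum_distrib_left sum_divide_distrib)
  also have "\<dots> \<le> (\<Sum>j\<in>{m<..ms}. weight j * signal j)"
  proof (rule sum_mono)
    fix j assume j: "j \<in> {m<..ms}"
    then have "j \<in> {1..ms}" using m by auto
    then have Lj: "0 < Lam lam j" "Lam lam j \<le> LM" using Lam_pos Lam_le_LM by auto
    have "u j / (eps * LM) \<le> u j / (eps * Lam lam j)"
      using Lj eps_pos by (intro divide_left_mono mult_left_mono mult_pos_pos) (auto simp: u_def)
    also have "\<dots> = signal j" using lam_nz Lj(1) by (simp add: signal_def u_def Lam_def)
    finally have "u j / (eps * LM) \<le> signal j" .
    moreover have "D \<le> weight j" using weight_ge \<open>j \<in> {1..ms}\<close> m_star_le_G by (auto simp: D_def)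
    ultimately show "D * (u j / (eps * LM)) \<le> weight j * signal j"
      using D eps_pos LM_pos by (intro mult_mono) (auto simp: u_def signal_nonneg)
  qed
  finally show ?thesis .
qed

definition envelope_below :: "nat \<Rightarrow> (nat \<Rightarrow> real) \<Rightarrow> real" where
  "envelope_below m Y = exp (3 * C * (real ms - real m) / 2) *
     (\<Prod>j\<in>{m<..ms}. exp (- weight j / (2 * eps) * (Y j - lam j * eta j)^2))"

lemma post_le_envelope_below:
  assumes "1 \<le> m" "m < ms"
  shows "post lam eps eta tau C Y m \<le> envelope_below m Y"
proof -
  have "post lam eps eta tau C Y m \<le> exp (3 * C * (real ms - real m) / 2) *
      (\<Prod>j\<in>{m<..ms}. exp (- (weight j * (Y j - lam j * eta j)^2 / eps) / 2))"
    unfolding post_eq_chi_square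
    by (rule normalised_exp_weight_le_below[OF chi_square_def assms m_star_le_G])
  also have "\<dots> = envelope_below m Y"
    unfolding envelope_below_def by (intro arg_cong2[where f = "(*)"] refl prod.cong) (auto simp: field_simps)
  finally show ?thesis .
qed

lemma envelope_below_exponent_le:
  assumes m: "1 \<le> m" "m < ms" and b: "threshold < b_bias theta eta m"
  shows "3 * C * (real ms - real m) / 2 - (\<Sum>j\<in>{m<..ms}. weight j * signal j) / 4 \<le> - (C * rr / 5) * real ms"
proof -
  have "C * real ms \<le> C * rr * real ms" using C_ge by (simp add: mult_right_mono)
  moreover have "0 \<le> C * real m" "0 \<le> C * rr * real ms" using C_ge by simp_all
  moreover have "7 * (C * rr * real ms) \<le> (\<Sum>j\<in>{m<..ms}. weight j * signal j)"
    using sum_weight_signal_ge[OF m b] by simp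
  moreover have "3 * C * (real ms - real m) / 2 = 3 * (C * real ms) / 2 - 3 * (C * real m) / 2"
    by (simp add: right_diff_distrib diff_divide_distrib)
  moreover have "- (C * rr / 5) * real ms = - (C * rr * real ms) / 5" by simp
  ultimately show ?thesis by linarith
qed

lemma nn_integral_envelope_below_le:
  assumes m: "1 \<le> m" "m < ms" and b: "threshold < b_bias theta eta m"
  shows "(\<integral>\<^sup>+Y. ennreal (envelope_below m Y) \<partial>data_law lam eps theta) \<le> ennreal rate"
proof -
  let ?S = "\<Sum>j\<in>{m<..ms}. weight j * signal j"
  have "(\<integral>\<^sup>+Y. ennreal (envelope_below m Y) \<partial>data_law lam eps theta)
      \<le> ennreal (exp (3 * C * (real ms - real m) / 2) * (\<Prod>j\<in>{m<..ms}. exp (- weight j * signal j / 4)))"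
    unfolding envelope_below_def
  proof (rule nn_integral_data_law_exp_squares_le[OF eps_pos])
    fix j assume "j \<in> {m<..ms}"
    then have w: "0 < weight j" "weight j \<le> 1" using weight_pos weight_le_1 m by auto
    have c: "1 - 2 * (- weight j / (2 * eps)) * eps = 1 + weight j" using eps_pos by simp
    show "0 < 1 - 2 * (- weight j / (2 * eps)) * eps" unfolding c using w by simp
    have e: "- weight j / (2 * eps) * (lam j * theta j - lam j * eta j)^2 = - weight j * signal j / 2"
      using eps_pos by (simp add: signal_def power2_eq_square field_simps)
    show "exp (- weight j / (2 * eps) * (lam j * theta j - lam j * eta j)^2 /
        (1 - 2 * (- weight j / (2 * eps)) * eps)) / sqrt (1 - 2 * (- weight j / (2 * eps)) * eps)
      \<le> exp (- weight j * signal j / 4)"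
      unfolding c e by (rule gaussian_factor_le_below[OF w signal_nonneg])
  qed simp_all
  also have "exp (3 * C * (real ms - real m) / 2) * (\<Prod>j\<in>{m<..ms}. exp (- weight j * signal j / 4))
      = exp (3 * C * (real ms - real m) / 2 - ?S / 4)"
  proof -
    have "- ?S / 4 = (\<Sum>j\<in>{m<..ms}. - weight j * signal j / 4)"
      by (simp add: sum_negf sum_divide_distrib)
    then have "(\<Prod>j\<in>{m<..ms}. exp (- weight j * signal j / 4)) = exp (- ?S / 4)"
      by (simp add: exp_sum)
    then show ?thesis by (simp add: exp_add[symmetric])
  qed
  also have "\<dots> \<le> rate"
    using envelope_below_exponent_le[OF m b] by (simp add: rate_def)
  finally show ?thesis by (simp add: ennreal_leI)
qed

theorem expected_post_below_m_minus:
  "(\<integral>Y. (\<Sum>m\<in>{1..<m_minus a lam eps theta eta C L d r}. post lam eps eta tau C Y m) \<partial>data_law lam eps theta)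
     \<le> 2 * exp (- (C * rr / 5) * real ms + ln (real G))"
proof (rule expected_post_sum_le[where B = envelope_below])
  show "{1..<m_minus a lam eps theta eta C L d r} \<subseteq> {1..G}"
    using m_minus_le_m_star m_star_le_G by auto
  fix m assume m: "m \<in> {1..<m_minus a lam eps theta eta C L d r}"
  then have "1 \<le> m" "m < ms" using m_minus_le_m_star by auto
  then show "post lam eps eta tau C Y m \<le> envelope_below m Y" for Y
    by (rule post_le_envelope_below)
  show "(\<integral>\<^sup>+Y. ennreal (envelope_below m Y) \<partial>data_law lam eps theta) \<le> ennreal rate"
    using m \<open>m < ms\<close> threshold_lt_b_bias by (intro nn_integral_envelope_below_le) auto
  show "envelope_below m \<in> borel_measurable (data_law lam eps theta)"
    unfolding envelope_below_def by (rule exp_squares_measurable)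
qed (simp add: envelope_below_def prod_nonneg)

lemma m_plus_eq: "m_plus a lam eps L r = Max {m \<in> {ms..G}. real m \<le> 5 * L * rr * scale}"
proof -
  have "5 * L * (1 / (eps * LM)) * rr * Ps = 5 * L * rr * scale" by (simp add: scale_def)
  then show ?thesis by (simp add: m_plus_def)
qed

lemma m_star_le_m_plus: "ms \<le> m_plus a lam eps L r"
proof -
  have "L * scale * 1 \<le> L * scale * (5 * rr)"
    using L_ge scale_pos by (intro mult_left_mono) auto
  then have "real ms \<le> 5 * L * rr * scale" using m_star_le_scale by (simp add: ac_simps)
  then show ?thesis unfolding m_plus_eq using m_star_le_G by (intro Max_ge) auto
qed

lemma scale_lt_of_m_plus_lt:
  assumes "m_plus a lam eps L r < m" "m \<le> G"
  shows "5 * L * rr * scale < real m"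
proof (rule ccontr)
  assume "\<not> 5 * L * rr * scale < real m"
  then have "m \<le> m_plus a lam eps L r"
    unfolding m_plus_eq using assms m_star_le_m_plus by (intro Max_ge) auto
  then show False using assms by simp
qed

text \<open>Assumption E(i) bounds the signal beyond \<open>m^*\<close> by the tail bias, which is of order \<open>\<Phi>^*\<close>.\<close>

lemma sum_signal_le:
  assumes "ms < m"
  shows "(\<Sum>j\<in>{ms<..m}. signal j) \<le> C * rr * scale"
proof -
  have "(\<Sum>j\<in>{ms<..m}. signal j) \<le> (\<Sum>j\<in>{ms<..m}. C / (eps * LM) * (theta j - eta j)^2)"
  proof (rule sum_mono)
    fix j assume "j \<in> {ms<..m}"
    then have "(lam j)^2 * (theta j - eta j)^2 \<le> C / LM * (theta j - eta j)^2"
      using lam_sq_beyond_m_star by (intro mult_right_mono) auto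
    then show "signal j \<le> C / (eps * LM) * (theta j - eta j)^2"
      using eps_pos by (simp add: signal_def divide_right_mono field_simps)
  qed
  also have "\<dots> = C / (eps * LM) * (\<Sum>j\<in>{ms<..m}. (theta j - eta j)^2)"
    by (simp add: sum_distrib_left)
  also have "(\<Sum>j\<in>{ms<..m}. (theta j - eta j)^2) \<le> rr * Ps"
    using b_bias_split[of ms m] b_bias_nonneg[of m] b_bias_m_star_le assms by simp
  then have "C / (eps * LM) * (\<Sum>j\<in>{ms<..m}. (theta j - eta j)^2) \<le> C / (eps * LM) * (rr * Ps)"
    using C_ge eps_pos LM_pos by (intro mult_left_mono) auto
  finally show ?thesis by (simp add: scale_def)
qed

definition envelope_above :: "nat \<Rightarrow> (nat \<Rightarrow> real) \<Rightarrow> real" where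
  "envelope_above m Y = exp (- 3 * C * (real m - real ms) / 4) *
     (\<Prod>j\<in>{ms<..m}. exp (weight j / (4 * eps) * (Y j - lam j * eta j)^2))"

lemma post_le_envelope_above:
  assumes "ms < m" "m \<le> G"
  shows "post lam eps eta tau C Y m \<le> envelope_above m Y"
proof -
  have "post lam eps eta tau C Y m \<le> exp (- 3 * C * (real m - real ms) / 4) *
      (\<Prod>j\<in>{ms<..m}. exp (weight j * (Y j - lam j * eta j)^2 / eps / 4))"
    unfolding post_eq_chi_square
    by (rule normalised_exp_weight_le_above[OF chi_square_def one_le_m_star assms])
  also have "\<dots> = envelope_above m Y"
    unfolding envelope_above_def by (intro arg_cong2[where f = "(*)"] refl prod.cong) (auto simp: field_simps)
  finally show ?thesis .
qed

lemma envelope_above_exponent_le: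
  assumes m: "ms < m" "5 * L * rr * scale < real m"
  shows "- 3 * C * (real m - real ms) / 4 + ((real m - real ms) / 2 + (\<Sum>j\<in>{ms<..m}. signal j) / 2)
    \<le> - (C * rr / 5) * real ms"
proof -
  define V where "V = C * L * rr * scale"
  have "5 * V \<le> C * real m"
    using mult_left_mono[OF less_imp_le[OF m(2)], of C] C_ge by (simp add: V_def ac_simps)
  moreover have "0 \<le> C * rr * real ms" using C_ge by simp
  moreover have "C * rr * real ms \<le> V"
    using mult_left_mono[OF m_star_le_scale, of "C * rr"] C_ge by (simp add: V_def ac_simps)
  moreover have "C * real ms \<le> V"
  proof -
    have "L * scale * 1 \<le> L * scale * rr" using L_ge scale_pos by (intro mult_left_mono) auto
    then show ?thesis
      using mult_left_mono[OF m_star_le_scale, of C] C_ge by (simp add: V_def ac_simps)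
  qed
  moreover have "C * rr * scale \<le> V"
    using mult_left_mono[OF L_ge, of "C * rr * scale"] C_ge scale_pos by (simp add: V_def ac_simps)
  moreover have "real m - real ms \<le> C * real m - C * real ms"
    using m C_ge mult_right_mono[of 1 C "real m - real ms"] by (simp add: algebra_simps)
  moreover have "(\<Sum>j\<in>{ms<..m}. signal j) \<le> C * rr * scale" using sum_signal_le m by simp
  moreover have "- 3 * C * (real m - real ms) / 4 = - 3 * (C * real m - C * real ms) / 4"
    by (simp add: right_diff_distrib)
  moreover have "- (C * rr / 5) * real ms = - (C * rr * real ms) / 5" by simp
  ultimately show ?thesis by argo
qed

lemma nn_integral_envelope_above_le:
  assumes m: "ms < m" "5 * L * rr * scale < real m"
  shows "(\<integral>\<^sup>+Y. ennreal (envelope_above m Y) \<partial>data_law lam eps theta) \<le> ennreal rate"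
proof -
  let ?S = "\<Sum>j\<in>{ms<..m}. signal j"
  have "(\<integral>\<^sup>+Y. ennreal (envelope_above m Y) \<partial>data_law lam eps theta)
      \<le> ennreal (exp (- 3 * C * (real m - real ms) / 4) * (\<Prod>j\<in>{ms<..m}. exp (1 / 2 + signal j / 2)))"
    unfolding envelope_above_def
  proof (rule nn_integral_data_law_exp_squares_le[OF eps_pos])
    fix j assume "j \<in> {ms<..m}"
    then have w: "0 < weight j" "weight j \<le> 1" using weight_pos weight_le_1 one_le_m_star by auto
    have c: "1 - 2 * (weight j / (4 * eps)) * eps = 1 - weight j / 2" using eps_pos by simp
    show "0 < 1 - 2 * (weight j / (4 * eps)) * eps" unfolding c using w by simp
    have e: "weight j / (4 * eps) * (lam j * theta j - lam j * eta j)^2 = weight j * signal j / 4"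
      using eps_pos by (simp add: signal_def power2_eq_square field_simps)
    show "exp (weight j / (4 * eps) * (lam j * theta j - lam j * eta j)^2 /
        (1 - 2 * (weight j / (4 * eps)) * eps)) / sqrt (1 - 2 * (weight j / (4 * eps)) * eps)
      \<le> exp (1 / 2 + signal j / 2)"
      unfolding c e by (rule gaussian_factor_le_above[OF w signal_nonneg])
  qed simp_all
  also have "exp (- 3 * C * (real m - real ms) / 4) * (\<Prod>j\<in>{ms<..m}. exp (1 / 2 + signal j / 2))
      = exp (- 3 * C * (real m - real ms) / 4 + ((real m - real ms) / 2 + ?S / 2))"
  proof -
    have "(\<Sum>j\<in>{ms<..m}. 1 / 2 + signal j / 2) = (real m - real ms) / 2 + ?S / 2"
      using m by (simp add: sum.distrib sum_divide_distrib of_nat_diff)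
    then have "(\<Prod>j\<in>{ms<..m}. exp (1 / 2 + signal j / 2)) = exp ((real m - real ms) / 2 + ?S / 2)"
      by (simp add: exp_sum[symmetric])
    then show ?thesis by (simp add: exp_add[symmetric])
  qed
  also have "\<dots> \<le> rate"
    using envelope_above_exponent_le[OF m] by (simp add: rate_def)
  finally show ?thesis by (simp add: ennreal_leI)
qed

theorem expected_post_above_m_plus:
  "(\<integral>Y. (\<Sum>m\<in>{m_plus a lam eps L r<..G}. post lam eps eta tau C Y m) \<partial>data_law lam eps theta)
     \<le> 2 * exp (- (C * rr / 5) * real ms + ln (real G))"
proof (rule expected_post_sum_le[where B = envelope_above])
  show "{m_plus a lam eps L r<..G} \<subseteq> {1..G}"
    using m_star_le_m_plus one_le_m_star by auto
  fix m assume m: "m \<in> {m_plus a lam eps L r<..G}"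
  then have "ms < m" "m \<le> G" using m_star_le_m_plus by auto
  then show "post lam eps eta tau C Y m \<le> envelope_above m Y" for Y
    by (rule post_le_envelope_above)
  show "(\<integral>\<^sup>+Y. ennreal (envelope_above m Y) \<partial>data_law lam eps theta) \<le> ennreal rate"
    using m \<open>ms < m\<close> scale_lt_of_m_plus_lt by (intro nn_integral_envelope_above_le) auto
  show "envelope_above m \<in> borel_measurable (data_law lam eps theta)"
    unfolding envelope_above_def by (rule exp_squares_measurable)
qed (simp add: envelope_above_def prod_nonneg)

end

theorem mainTheorem15:
  fixes lam eta a :: "nat \<Rightarrow> real" and tau :: "real \<Rightarrow> nat \<Rightarrow> real"
    and d C L r eps_star :: real
  assumes lam_bdd: "\<exists>B. \<forall>j. \<bar>lam j\<bar> \<le> B"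
    and lam_nz: "\<forall>j\<ge>1. lam j \<noteq> 0"
    and tau_pos: "\<forall>eps. 0 < eps \<and> eps < 1 \<longrightarrow> (\<forall>j\<ge>1. 0 < tau eps j)"
    and a_pos: "\<forall>j\<ge>1. 0 < a j"
    and a_mono: "\<forall>j\<ge>1. a (Suc j) \<le> a j"
    and a_one: "a 1 = 1"
    and a_lim: "a \<longlonglongrightarrow> 0"
    and assA: "0 < d \<and> (\<forall>eps. 0 < eps \<and> eps < 1 \<longrightarrow> (\<forall>j\<in>{1..G_eps lam eps}.
                 d * max (sqrt eps * sqrt (Lam lam j)) (eps * Lam lam j) \<le> tau eps j))"
    and C_ge: "1 \<le> C" and L_ge: "1 \<le> L"
    and assE1: "\<forall>k\<ge>1. \<forall>j>k. \<forall>i\<in>{1..k}. (lam j)^2 \<le> C * (lam i)^2"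
    and assE2: "\<forall>k\<ge>1. \<forall>l\<ge>1. Lam_max lam (k * l) \<le> Lam_max lam k * Lam_max lam l"
    and assE3: "\<forall>k\<ge>1. Lam_max lam k / Lam_bar lam k \<le> L"
    and r_pos: "0 < r"
    and eps_star: "0 < eps_star" "eps_star < 1"
    and mstar_le: "\<forall>eps. 0 < eps \<and> eps < eps_star \<longrightarrow> m_star a lam eps \<le> G_eps lam eps"
  shows "\<forall>theta \<in> Theta_a a eta r. summable (\<lambda>j. (theta j)^2) \<longrightarrow>
           (\<forall>eps. 0 < eps \<and> eps < eps_star \<longrightarrow>
             (\<integral>Y. (\<Sum>m\<in>{1..<m_minus a lam eps theta eta C L d r}. post lam eps eta (tau eps) C Y m)
                 \<partial>data_law lam eps theta)
               \<le> 2 * exp (- (C * max 1 r / 5) * real (m_star a lam eps) + ln (real (G_eps lam eps)))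
           \<and> (\<integral>Y. (\<Sum>m\<in>{m_plus a lam eps L r<..G_eps lam eps}. post lam eps eta (tau eps) C Y m)
                 \<partial>data_law lam eps theta)
               \<le> 2 * exp (- (C * max 1 r / 5) * real (m_star a lam eps) + ln (real (G_eps lam eps))))"
  apply (intro ballI impI allI)
  subgoal premises prems for theta eps
  proof -
    interpret posterior_setting a eta theta r lam "tau eps" eps d C L
      using prems lam_bdd lam_nz tau_pos a_pos a_mono a_one assA C_ge L_ge assE1 assE3 eps_star mstar_le
      by unfold_locales auto
    show ?thesis using expected_post_below_m_minus expected_post_above_m_plus ..
  qed
  done

end
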